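(* Let $H$ be a $d\times d$ Hermitian matrix with eigendecomposition $H=U\,\mathrm{diag}(\mathbf{q})\,U^\dagger$, where $U$ is unitary and $\mathbf{q}\in\mathbb{R}^d$, and let $t\ge 1/d$. Then $$\min_{\rho\in S^t}\|\rho-H\|_2^2=\min_{\mathbf{p}\in P(t)}\|\mathbf{p}-\mathbf{q}\|_2^2,$$ and if $\mathbf{p}^*$ is a minimizer of the right-hand side then $U\,\mathrm{diag}(\mathbf{p}^* )\,U^\dagger$ is a minimizer of the left-hand side.
   Context: $\|A\|_2=\sqrt{\mathrm{Tr}(A^\dagger A)}$ is the Frobenius norm and $\|\mathbf{x}\|_2$ the Euclidean norm. $S^t=\{\rho\succeq 0,\ \mathrm{Tr}\rho=1,\ \mathrm{Tr}(\rho^2)\le t\}$ (on $\mathbb{C}^d$). $P(t)=\{\mathbf{p}\in\mathbb{R}^d:\mathbf{p}\ge0,\ \sum_i\mathbf{p}_i=1,\ \mathbf{p}\cdot\mathbf{p}\le t\}$. *)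

theory Defs
  imports "HOL-Analysis.Analysis"
begin

text \<open>d x d complex matrices are modelled as complex^'n^'n with d = CARD('n).\<close>

definition conj_transpose :: "complex^'n^'m \<Rightarrow> complex^'m^'n" where
  "conj_transpose A = (\<chi> i j. cnj (A $ j $ i))"

definition hermitian :: "complex^'n^'n \<Rightarrow> bool" where
  "hermitian A \<longleftrightarrow> conj_transpose A = A"

definition unitary :: "complex^'n^'n \<Rightarrow> bool" where
  "unitary U \<longleftrightarrow> U ** conj_transpose U = mat 1 \<and> conj_transpose U ** U = mat 1"

definition diag_mat :: "real^'n \<Rightarrow> complex^'n^'n" where
  "diag_mat q = (\<chi> i j. if i = j then complex_of_real (q $ i) else 0)"

definition psd :: "complex^'n^'n \<Rightarrow> bool" where
  "psd A \<longleftrightarrow> (\<forall>x::complex^'n.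
      let v = (\<Sum>i\<in>UNIV. cnj (x $ i) * (A *v x) $ i) in Im v = 0 \<and> Re v \<ge> 0)"

definition frob_norm :: "complex^'n^'n \<Rightarrow> real" where
  "frob_norm A = sqrt (Re (trace (conj_transpose A ** A)))"

definition S_set :: "real \<Rightarrow> (complex^'n^'n) set" where
  "S_set t = {\<rho>. psd \<rho> \<and> trace \<rho> = 1 \<and> Re (trace (\<rho> ** \<rho>)) \<le> t}"

definition P_set :: "real \<Rightarrow> (real^'n) set" where
  "P_set t = {p. (\<forall>i. p $ i \<ge> 0) \<and> (\<Sum>i\<in>UNIV. p $ i) = 1 \<and> p \<bullet> p \<le> t}"

end

theory Submission
  imports Defs
begin

text \<open>Conjugation by a unitary U preserves positivity, trace and purity, and is an isometry
  for the Frobenius norm, so it suffices to treat H = diag q. Then any \<rho> \<in> S^t has real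
  nonnegative diagonal p of sum 1, and pinching gives p \<bullet> p \<le> Tr(\<rho>^2) \<le> t and
  ||p - q||^2 \<le> ||\<rho> - diag q||^2, because deleting the off-diagonal entries of a matrix
  (and the imaginary parts of its diagonal) can only lower its Frobenius norm.
  Conversely diag p \<in> S^t for every p \<in> P(t) with ||diag p - diag q|| = ||p - q||.
  P(t) is compact and contains the uniform distribution, so the minima exist.\<close>

lemma conj_transpose_conj_transpose [simp]: "conj_transpose (conj_transpose A) = A"
  by (vector conj_transpose_def)

lemma conj_transpose_mult:
  fixes A :: "complex^'n^'m" and B :: "complex^'p^'n"
  shows "conj_transpose (A ** B) = conj_transpose B ** conj_transpose A"
  by (vector conj_transpose_def matrix_matrix_mult_def mult.commute)

lemma matrix_diff_ldistrib: "(A :: 'a::ring_1^'n^'m) ** (B - C) = A ** B - A ** C"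
  by (vector matrix_matrix_mult_def sum_subtractf[symmetric] field_simps)

lemma matrix_diff_rdistrib: "((B :: 'a::ring_1^'n^'m) - C) ** A = B ** A - C ** A"
  by (vector matrix_matrix_mult_def sum_subtractf[symmetric] field_simps)

lemma diag_mat_diff: "diag_mat p - diag_mat q = diag_mat (p - q)"
  by (vector diag_mat_def)

lemma diag_mat_mult: "diag_mat p ** diag_mat q = diag_mat (\<chi> i. p $ i * q $ i)"
proof -
  have "(\<Sum>k\<in>UNIV. (if i = k then complex_of_real (p $ i) else 0)
                    * (if k = j then complex_of_real (q $ k) else 0))
      = (\<Sum>k\<in>UNIV. if k = i then (if i = j then complex_of_real (p $ i * q $ i) else 0) else 0)" for i j
    by (rule sum.cong) auto
  then show ?thesis
    unfolding diag_mat_def matrix_matrix_mult_def by (simp add: vec_eq_iff)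
qed

lemma trace_diag_mat: "trace (diag_mat p) = of_real (\<Sum>i\<in>UNIV. p $ i)"
  by (simp add: trace_def diag_mat_def)

lemma unitary_conj_transpose: "unitary U \<Longrightarrow> unitary (conj_transpose U)"
  by (simp add: unitary_def)

lemma unitary_conj_mult:
  assumes "unitary U"
  shows "(U ** A ** conj_transpose U) ** (U ** B ** conj_transpose U) = U ** (A ** B) ** conj_transpose U"
  using assms unfolding unitary_def by (metis matrix_mul_assoc matrix_mul_rid)

lemma unitary_conj_cancel:
  assumes "unitary U"
  shows "conj_transpose U ** (U ** A ** conj_transpose U) ** U = A"
  using assms unfolding unitary_def by (metis matrix_mul_assoc matrix_mul_lid matrix_mul_rid)

lemma trace_unitary_conj:
  assumes "unitary U"
  shows "trace (U ** A ** conj_transpose U) = trace A"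
  using assms unfolding unitary_def by (metis matrix_mul_assoc matrix_mul_lid trace_mul_sym)

lemma Re_trace_gram:
  "Re (trace (conj_transpose A ** A)) = (\<Sum>i\<in>UNIV. \<Sum>k\<in>UNIV. cmod (A $ k $ i) ^ 2)"
proof -
  have "trace (conj_transpose A ** A) = (\<Sum>i\<in>UNIV. \<Sum>k\<in>UNIV. A $ k $ i * cnj (A $ k $ i))"
    unfolding trace_def conj_transpose_def matrix_matrix_mult_def by (simp add: mult.commute)
  then show ?thesis
    by (simp add: complex_mult_cnj cmod_power2)
qed

lemma frob_norm_sq: "frob_norm A ^ 2 = (\<Sum>i\<in>UNIV. \<Sum>k\<in>UNIV. cmod (A $ k $ i) ^ 2)"
  by (simp add: frob_norm_def Re_trace_gram sum_nonneg)

lemma frob_norm_diag_mat: "frob_norm (diag_mat v) = norm v"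
proof -
  have "cmod (diag_mat v $ k $ i) ^ 2 = (if k = i then (v $ i) ^ 2 else 0)" for k i
    by (simp add: diag_mat_def)
  then show ?thesis
    unfolding frob_norm_def Re_trace_gram by (simp add: norm_vec_def L2_set_def)
qed

lemma frob_norm_unitary_conj:
  assumes "unitary U"
  shows "frob_norm (U ** A ** conj_transpose U) = frob_norm A"
proof -
  have "conj_transpose (U ** A ** conj_transpose U) = U ** conj_transpose A ** conj_transpose U"
    by (simp add: conj_transpose_mult matrix_mul_assoc)
  then have "conj_transpose (U ** A ** conj_transpose U) ** (U ** A ** conj_transpose U)
      = U ** (conj_transpose A ** A) ** conj_transpose U"
    by (simp only: unitary_conj_mult[OF assms])
  then show ?thesis
    unfolding frob_norm_def by (simp add: trace_unitary_conj[OF assms])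
qed

lemma frob_norm_unitary_conj_diag_mat_diff:
  assumes "unitary U"
  shows "frob_norm (U ** diag_mat p ** conj_transpose U - U ** diag_mat q ** conj_transpose U)
    = norm (p - q)"
proof -
  have "U ** diag_mat p ** conj_transpose U - U ** diag_mat q ** conj_transpose U
      = U ** diag_mat (p - q) ** conj_transpose U"
    by (simp only: matrix_diff_ldistrib matrix_diff_rdistrib diag_mat_diff[symmetric])
  then show ?thesis
    by (simp add: frob_norm_unitary_conj[OF assms] frob_norm_diag_mat)
qed

definition quad_form :: "complex^'n^'n \<Rightarrow> complex^'n \<Rightarrow> complex" where
  "quad_form A x = (\<Sum>i\<in>UNIV. cnj (x $ i) * (A *v x) $ i)"

lemma psd_iff_quad_form: "psd A \<longleftrightarrow> (\<forall>x. Im (quad_form A x) = 0 \<and> Re (quad_form A x) \<ge> 0)"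
  unfolding psd_def quad_form_def Let_def ..

lemma conj_transpose_adjoint:
  fixes B :: "complex^'n^'m"
  shows "(\<Sum>i\<in>UNIV. cnj (x $ i) * (conj_transpose B *v y) $ i) = (\<Sum>k\<in>UNIV. cnj ((B *v x) $ k) * y $ k)"
proof -
  have "(\<Sum>i\<in>UNIV. cnj (x $ i) * (conj_transpose B *v y) $ i)
      = (\<Sum>i\<in>UNIV. \<Sum>k\<in>UNIV. cnj (x $ i) * cnj (B $ k $ i) * y $ k)"
    unfolding conj_transpose_def matrix_vector_mult_def by (simp add: sum_distrib_left mult.assoc)
  also have "\<dots> = (\<Sum>k\<in>UNIV. \<Sum>i\<in>UNIV. cnj (x $ i) * cnj (B $ k $ i) * y $ k)"
    by (rule sum.swap)
  also have "\<dots> = (\<Sum>k\<in>UNIV. cnj ((B *v x) $ k) * y $ k)"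
    unfolding matrix_vector_mult_def by (simp add: sum_distrib_right sum_distrib_left mult_ac)
  finally show ?thesis .
qed

lemma quad_form_congruence:
  fixes A :: "complex^'m^'m" and B :: "complex^'n^'m"
  shows "quad_form (conj_transpose B ** A ** B) x = quad_form A (B *v x)"
  unfolding quad_form_def by (simp add: matrix_vector_mul_assoc[symmetric] conj_transpose_adjoint)

lemma psd_congruence: "psd A \<Longrightarrow> psd (conj_transpose B ** A ** B)"
  by (simp add: psd_iff_quad_form quad_form_congruence)

lemma matrix_vector_mult_axis: "((A :: 'a::semiring_1^'n^'m) *v axis i 1) $ k = A $ k $ i"
  unfolding matrix_vector_mult_def axis_def by (simp add: mult_delta_right)

lemma quad_form_axis: "quad_form A (axis i 1) = A $ i $ i"
proof -
  have "quad_form A (axis i 1) = (\<Sum>k\<in>UNIV. if k = i then A $ i $ i else 0)"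
    unfolding quad_form_def matrix_vector_mult_axis by (rule sum.cong) (auto simp: axis_def)
  then show ?thesis
    by simp
qed

lemma diag_mat_vector_mult: "(diag_mat p *v y) $ i = of_real (p $ i) * y $ i"
proof -
  have "(diag_mat p *v y) $ i = (\<Sum>k\<in>UNIV. if k = i then of_real (p $ i) * y $ i else 0)"
    unfolding matrix_vector_mult_def diag_mat_def vec_lambda_beta by (rule sum.cong) auto
  then show ?thesis
    by simp
qed

lemma quad_form_diag_mat: "quad_form (diag_mat p) y = of_real (\<Sum>i\<in>UNIV. p $ i * cmod (y $ i) ^ 2)"
proof -
  have "cnj (y $ i) * (of_real (p $ i) * y $ i) = of_real (p $ i * cmod (y $ i) ^ 2)" for i
    by (simp only: of_real_mult complex_norm_square mult_ac)
  then show ?thesis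
    by (simp only: quad_form_def diag_mat_vector_mult of_real_sum)
qed

lemma psd_diag_mat: "(\<And>i. p $ i \<ge> 0) \<Longrightarrow> psd (diag_mat p)"
  by (simp add: psd_iff_quad_form quad_form_diag_mat sum_nonneg)

lemma quad_form_two_coords:
  fixes A :: "complex^'n^'n"
  assumes "i \<noteq> j"
  shows "quad_form A (\<chi> k. if k = i then 1 else if k = j then c else 0)
    = A $ i $ i + c * A $ i $ j + cnj c * A $ j $ i + cnj c * c * A $ j $ j"
proof -
  let ?x = "(\<chi> k. if k = i then 1 else if k = j then c else 0) :: complex^'n"
  have Ax: "(A *v ?x) $ m = A $ m $ i + c * A $ m $ j" for m
  proof -
    have "(A *v ?x) $ m = (\<Sum>k\<in>UNIV. (if k = i then A $ m $ i else 0) + (if k = j then c * A $ m $ j else 0))"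
      unfolding matrix_vector_mult_def vec_lambda_beta by (rule sum.cong) (use assms in auto)
    then show ?thesis
      by (simp only: sum.distrib) simp
  qed
  have "quad_form A ?x
      = (\<Sum>k\<in>UNIV. (if k = i then A $ i $ i + c * A $ i $ j else 0)
                    + (if k = j then cnj c * (A $ j $ i + c * A $ j $ j) else 0))"
    unfolding quad_form_def Ax by (rule sum.cong) (use assms in auto)
  also have "\<dots> = A $ i $ i + c * A $ i $ j + cnj c * (A $ j $ i + c * A $ j $ j)"
    by (simp only: sum.distrib) simp
  finally show ?thesis
    by (simp add: algebra_simps)
qed

lemma psd_diagonal:
  assumes "psd A"
  shows "Im (A $ i $ i) = 0" "Re (A $ i $ i) \<ge> 0"
  using assms quad_form_axis[of A i] unfolding psd_iff_quad_form by metis+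

lemma hermitian_iff: "hermitian A \<longleftrightarrow> (\<forall>i j. cnj (A $ j $ i) = A $ i $ j)"
  by (simp add: hermitian_def conj_transpose_def vec_eq_iff)

text \<open>Positivity on the test vectors e_i + e_j and e_i + \<i> e_j forces A_ji = cnj A_ij.\<close>

lemma psd_imp_hermitian:
  assumes "psd A"
  shows "hermitian A"
  unfolding hermitian_iff
proof (intro allI)
  fix i j
  show "cnj (A $ j $ i) = A $ i $ j"
  proof (cases "i = j")
    case True
    then show ?thesis using psd_diagonal[OF assms, of i] by (simp add: complex_eq_iff)
  next
    case False
    have real_diag: "Im (A $ i $ i) = 0" "Im (A $ j $ j) = 0"
      using psd_diagonal[OF assms] by auto
    have "Im (quad_form A (\<chi> k. if k = i then 1 else if k = j then c else 0)) = 0" for c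
      using assms unfolding psd_iff_quad_form by blast
    from this[of 1] this[of \<i>] show ?thesis
      using real_diag by (simp add: quad_form_two_coords[OF False] complex_eq_iff)
  qed
qed

lemma trace_square_hermitian:
  assumes "hermitian A"
  shows "Re (trace (A ** A)) = (\<Sum>i\<in>UNIV. \<Sum>j\<in>UNIV. cmod (A $ i $ j) ^ 2)"
proof -
  have "trace (A ** A) = (\<Sum>i\<in>UNIV. \<Sum>j\<in>UNIV. A $ i $ j * cnj (A $ i $ j))"
    using assms unfolding trace_def matrix_matrix_mult_def hermitian_iff by simp
  then show ?thesis
    by (simp add: complex_mult_cnj cmod_power2)
qed

lemma S_set_unitary_conj:
  assumes "unitary U" "A \<in> S_set t"
  shows "U ** A ** conj_transpose U \<in> S_set t"
  using assms psd_congruence[of A "conj_transpose U"]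
  by (simp add: S_set_def unitary_conj_mult trace_unitary_conj)

lemma diag_mat_in_S_set:
  assumes "p \<in> P_set t"
  shows "diag_mat p \<in> S_set t"
proof -
  have "trace (diag_mat p ** diag_mat p) = of_real (p \<bullet> p)"
    by (simp add: diag_mat_mult trace_diag_mat inner_vec_def)
  then show ?thesis
    using assms psd_diag_mat[of p] unfolding S_set_def P_set_def by (simp add: trace_diag_mat)
qed

lemma diagonal_in_P_set:
  fixes A :: "complex^'n^'n"
  assumes "A \<in> S_set t"
  shows "(\<chi> i. Re (A $ i $ i)) \<in> P_set t"
proof -
  let ?p = "(\<chi> i. Re (A $ i $ i)) :: real^'n"
  have psd: "psd A" and trace: "trace A = 1" and purity: "Re (trace (A ** A)) \<le> t"
    using assms unfolding S_set_def by auto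
  have "(\<Sum>i\<in>UNIV. ?p $ i) = Re (trace A)"
    by (simp add: trace_def)
  then have "(\<Sum>i\<in>UNIV. ?p $ i) = 1"
    by (simp add: trace)
  moreover have "?p \<bullet> ?p \<le> t"
  proof -
    have "?p \<bullet> ?p = (\<Sum>i\<in>UNIV. Re (A $ i $ i) ^ 2)"
      unfolding inner_vec_def by (simp add: power2_eq_square)
    also have "\<dots> = (\<Sum>i\<in>UNIV. cmod (A $ i $ i) ^ 2)"
      using psd_diagonal(1)[OF psd] by (simp add: cmod_power2)
    also have "\<dots> \<le> (\<Sum>i\<in>UNIV. \<Sum>j\<in>UNIV. cmod (A $ i $ j) ^ 2)"
      by (intro sum_mono member_le_sum) auto
    also have "\<dots> \<le> t"
      using purity trace_square_hermitian[OF psd_imp_hermitian[OF psd]] by simp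
    finally show ?thesis .
  qed
  ultimately show ?thesis
    using psd_diagonal(2)[OF psd] unfolding P_set_def by simp
qed

lemma norm_diagonal_diff_le_frob_norm:
  fixes A :: "complex^'n^'n"
  shows "norm ((\<chi> i. Re (A $ i $ i)) - q) ^ 2 \<le> frob_norm (A - diag_mat q) ^ 2"
proof -
  have "norm ((\<chi> i. Re (A $ i $ i)) - q) ^ 2 = (\<Sum>i\<in>UNIV. Re ((A - diag_mat q) $ i $ i) ^ 2)"
    unfolding power2_norm_eq_inner inner_vec_def by (simp add: diag_mat_def power2_eq_square)
  also have "\<dots> \<le> (\<Sum>i\<in>UNIV. cmod ((A - diag_mat q) $ i $ i) ^ 2)"
    by (intro sum_mono) (simp add: cmod_power2)
  also have "\<dots> \<le> frob_norm (A - diag_mat q) ^ 2"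
    unfolding frob_norm_sq by (intro sum_mono member_le_sum) auto
  finally show ?thesis .
qed

lemma compact_P_set: "compact (P_set t :: (real^'n) set)"
proof -
  have "P_set t = (\<Inter>i. {p::real^'n. p $ i \<ge> 0}) \<inter> {p. (\<Sum>i\<in>UNIV. p $ i) = 1} \<inter> {p. p \<bullet> p \<le> t}"
    unfolding P_set_def by auto
  then have "closed (P_set t :: (real^'n) set)"
    by (simp only:) (intro closed_Int closed_INT ballI closed_Collect_le closed_Collect_eq continuous_intros)
  moreover have "bounded (P_set t :: (real^'n) set)"
    unfolding bounded_iff
  proof (intro exI ballI)
    fix p :: "real^'n"
    assume "p \<in> P_set t"
    then show "norm p \<le> sqrt t"
      unfolding P_set_def by (simp add: norm_eq_sqrt_inner)
  qed
  ultimately show ?thesis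
    by (simp add: compact_eq_bounded_closed)
qed

lemma uniform_in_P_set:
  assumes "t \<ge> 1 / real CARD('n)"
  shows "(\<chi> i. 1 / real CARD('n)) \<in> (P_set t :: (real^'n) set)"
  using assms unfolding P_set_def by (simp add: inner_vec_def power2_eq_square)

lemma P_set_nearest_point_exists:
  fixes q :: "real^'n"
  assumes "t \<ge> 1 / real CARD('n)"
  shows "\<exists>p\<in>P_set t. \<forall>p'\<in>P_set t. norm (p - q) ^ 2 \<le> norm (p' - q) ^ 2"
proof -
  have "(P_set t :: (real^'n) set) \<noteq> {}"
    using uniform_in_P_set[OF assms] by blast
  moreover have "continuous_on (P_set t) (\<lambda>p. norm (p - q) ^ 2)"
    by (intro continuous_intros)
  ultimately show ?thesis
    by (rule continuous_attains_inf[OF compact_P_set])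
qed

lemma unitary_conj_diag_mat_nearest:
  assumes U: "unitary U" and p: "p \<in> P_set t"
    and nearest: "\<forall>p'\<in>P_set t. norm (p - q) ^ 2 \<le> norm (p' - q) ^ 2" and \<sigma>: "\<sigma> \<in> S_set t"
  shows "frob_norm (U ** diag_mat p ** conj_transpose U - U ** diag_mat q ** conj_transpose U) ^ 2
    \<le> frob_norm (\<sigma> - U ** diag_mat q ** conj_transpose U) ^ 2"
proof -
  let ?A = "conj_transpose U ** \<sigma> ** U"
  have "?A \<in> S_set t"
    using S_set_unitary_conj[OF unitary_conj_transpose[OF U] \<sigma>] by simp
  then have "(\<chi> i. Re (?A $ i $ i)) \<in> P_set t"
    by (rule diagonal_in_P_set)
  have "frob_norm (U ** diag_mat p ** conj_transpose U - U ** diag_mat q ** conj_transpose U) ^ 2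
      = norm (p - q) ^ 2"
    by (simp add: frob_norm_unitary_conj_diag_mat_diff[OF U])
  also have "\<dots> \<le> norm ((\<chi> i. Re (?A $ i $ i)) - q) ^ 2"
    using nearest \<open>(\<chi> i. Re (?A $ i $ i)) \<in> P_set t\<close> by blast
  also have "\<dots> \<le> frob_norm (?A - diag_mat q) ^ 2"
    by (rule norm_diagonal_diff_le_frob_norm)
  also have "\<dots> = frob_norm (U ** (?A - diag_mat q) ** conj_transpose U) ^ 2"
    by (simp add: frob_norm_unitary_conj[OF U])
  also have "U ** (?A - diag_mat q) ** conj_transpose U = \<sigma> - U ** diag_mat q ** conj_transpose U"
    using unitary_conj_cancel[OF unitary_conj_transpose[OF U], of \<sigma>]
    by (simp add: matrix_diff_ldistrib matrix_diff_rdistrib)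
  finally show ?thesis .
qed

theorem mainTheorem4:
  fixes H U :: "complex^'n^'n" and q :: "real^'n" and t :: real
  assumes "hermitian H"
    and "unitary U"
    and "H = U ** diag_mat q ** conj_transpose U"
    and "t \<ge> 1 / real CARD('n)"
  shows "(\<exists>\<rho>\<in>S_set t. \<forall>\<sigma>\<in>S_set t. frob_norm (\<rho> - H) ^ 2 \<le> frob_norm (\<sigma> - H) ^ 2)
    \<and> (\<exists>p\<in>P_set t. \<forall>p'\<in>P_set t. norm (p - q) ^ 2 \<le> norm (p' - q) ^ 2)
    \<and> (INF \<rho>\<in>S_set t. frob_norm (\<rho> - H) ^ 2) = (INF p\<in>P_set t. norm (p - q) ^ 2)
    \<and> (\<forall>p\<in>P_set t. (\<forall>p'\<in>P_set t. norm (p - q) ^ 2 \<le> norm (p' - q) ^ 2) \<longrightarrow>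
         U ** diag_mat p ** conj_transpose U \<in> S_set t \<and>
         (\<forall>\<sigma>\<in>S_set t. frob_norm (U ** diag_mat p ** conj_transpose U - H) ^ 2
                        \<le> frob_norm (\<sigma> - H) ^ 2))"
proof -
  obtain p0 where p0: "p0 \<in> P_set t" "\<forall>p'\<in>P_set t. norm (p0 - q) ^ 2 \<le> norm (p' - q) ^ 2"
    using P_set_nearest_point_exists[OF assms(4)] by blast
  have lifted_min: "U ** diag_mat p ** conj_transpose U \<in> S_set t \<and>
      (\<forall>\<sigma>\<in>S_set t. frob_norm (U ** diag_mat p ** conj_transpose U - H) ^ 2 \<le> frob_norm (\<sigma> - H) ^ 2)"
    if "p \<in> P_set t" "\<forall>p'\<in>P_set t. norm (p - q) ^ 2 \<le> norm (p' - q) ^ 2" for p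
    using S_set_unitary_conj[OF assms(2) diag_mat_in_S_set[OF that(1)]]
      unitary_conj_diag_mat_nearest[OF assms(2) that]
    unfolding assms(3) by blast
  have "(INF \<rho>\<in>S_set t. frob_norm (\<rho> - H) ^ 2) = frob_norm (U ** diag_mat p0 ** conj_transpose U - H) ^ 2"
    using lifted_min[OF p0] by (intro cInf_eq_minimum) auto
  also have "\<dots> = norm (p0 - q) ^ 2"
    unfolding assms(3) frob_norm_unitary_conj_diag_mat_diff[OF assms(2)] ..
  also have "\<dots> = (INF p\<in>P_set t. norm (p - q) ^ 2)"
    using p0 by (intro cInf_eq_minimum[symmetric]) auto
  finally have "(INF \<rho>\<in>S_set t. frob_norm (\<rho> - H) ^ 2) = (INF p\<in>P_set t. norm (p - q) ^ 2)" .
  moreover have "\<exists>\<rho>\<in>S_set t. \<forall>\<sigma>\<in>S_set t. frob_norm (\<rho> - H) ^ 2 \<le> frob_norm (\<sigma> - H) ^ 2"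
    using lifted_min[OF p0] by blast
  ultimately show ?thesis
    using p0 lifted_min by blast
qed

end
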